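(* Let $X_1,X_2,\dots$ be iid random variables with a light right tail, $S_k=X_1+\dots+X_k$, and let $Y$ be independent of $(X_k)$ and satisfy condition $(\mathrm{P})$ with constant $a>0$. In case (ii) of the light-tail definition (i.e. $X_1\le A$ a.s. and $P(X_1>\alpha)>0$) assume additionally $a\le\alpha$. Then for every $k\ge1$, $$\lim_{u\to\infty}\frac{P(Y+S_k>u)}{P(Y+S_{k+1}>u)}=0.$$
   Context: A random variable $X$ has a light right tail if either (i) $P(X>u)>0$ for all $u>0$ and $\lim_{u\to\infty}P(X_1>u)/P(X_1+X_2>u)=0$, where $X_1,X_2$ are independent copies of $X$; or (ii) there are constants $A>0,\alpha>0$ with $X\le A$ a.s. and $P(X>\alpha)>0$. A random variable $Y$ satisfies condition $(\mathrm{P})$ with constant $a>0$ if $P(Y>u)>0$ for all $u>0$ and $\lim_{u\to\infty}P(Y>u+a)/P(Y>u)=0$. *)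

theory Defs
  imports "HOL-Probability.Probability"
begin

text \<open>Case (i) of the light right tail definition, stated for the distribution mu of X.
  The sum of two independent copies of X has distribution mu convolved with mu.\<close>
definition light_tail_i :: "real measure \<Rightarrow> bool" where
  "light_tail_i \<mu> \<longleftrightarrow>
     (\<forall>u>0. measure \<mu> {u<..} > 0) \<and>
     ((\<lambda>u. measure \<mu> {u<..} / measure (\<mu> \<star> \<mu>) {u<..}) \<longlongrightarrow> 0) at_top"

definition light_tail_ii :: "real measure \<Rightarrow> real \<Rightarrow> real \<Rightarrow> bool" where
  "light_tail_ii \<mu> A \<alpha> \<longleftrightarrow>
     A > 0 \<and> \<alpha> > 0 \<and> (AE x in \<mu>. x \<le> A) \<and> measure \<mu> {\<alpha><..} > 0"

definition light_right_tail :: "real measure \<Rightarrow> bool" where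
  "light_right_tail \<mu> \<longleftrightarrow> light_tail_i \<mu> \<or> (\<exists>A \<alpha>. light_tail_ii \<mu> A \<alpha>)"

definition cond_P :: "real measure \<Rightarrow> real \<Rightarrow> bool" where
  "cond_P \<nu> a \<longleftrightarrow> a > 0 \<and>
     (\<forall>u>0. measure \<nu> {u<..} > 0) \<and>
     ((\<lambda>u. measure \<nu> {u + a<..} / measure \<nu> {u<..}) \<longlongrightarrow> 0) at_top"

end

(* Write T nu u = nu((u, oo)) for the right tail of a distribution nu on the reals, and nu * mu for
   convolution. The law of Y + S (k+1) is nu_k * mu, where nu_k is the law of Y + S k and mu that
   of X 1, and T (nu * mu) u is the nu-integral of T mu (u - w).
   If T nu (u + c) = o(T nu u) and mu((c, oo)) > 0, then T (nu * mu) u >= mu((c, oo)) T nu (u - c)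
   already dominates T nu u. In case (ii) this shift property holds for nu_0 with c = alpha >= a by
   condition (P), and it passes from nu to nu * mu because X 1 <= A. In case (i) it is needed for
   nu_0 only: choosing L with T mu <= delta T (mu * mu) on [L, oo) and splitting the integral at
   w = u - L gives T (nu * mu) u <= delta T (nu * mu * mu) u + T nu (u - L), and the last term is
   o(T (nu * mu * mu)) by induction. *)

theory Submission
  imports Defs "HOL-Library.Landau_Symbols"
begin

abbreviation tail :: "real measure \<Rightarrow> real \<Rightarrow> real" where
  "tail \<nu> u \<equiv> measure \<nu> {u<..}"

lemma filterlim_minus_const_at_top_real: "filterlim (\<lambda>u::real. u - c) at_top at_top"
  using filterlim_tendsto_add_at_top[OF tendsto_const[of "-c"] filterlim_ident] by simp

lemma tail_antimono:
  assumes "finite_measure \<nu>" "sets \<nu> = sets borel" "u \<le> v"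
  shows "tail \<nu> v \<le> tail \<nu> u"
  using assms by (intro finite_measure.finite_measure_mono) auto

lemma borel_measurable_tail_diff:
  assumes "finite_measure \<mu>" "sets \<mu> = sets borel" "sets N = sets borel"
  shows "(\<lambda>x. tail \<mu> (u - x)) \<in> borel_measurable N"
proof -
  have "mono (\<lambda>x. tail \<mu> (u - x))"
    by (rule monoI) (use assms in \<open>auto intro: tail_antimono\<close>)
  then show ?thesis
    using borel_measurable_mono measurable_cong_sets[OF assms(3) refl] by blast
qed

lemma integrable_tail_diff:
  assumes "finite_measure \<nu>" "sets \<nu> = sets borel" "finite_measure \<mu>" "sets \<mu> = sets borel"
  shows "integrable \<nu> (\<lambda>x. tail \<mu> (u - x))"
  using assms
  by (intro finite_measure.integrable_const_bound[where B = "measure \<mu> (space \<mu>)"]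
      borel_measurable_tail_diff) (auto intro!: finite_measure.bounded_measure)

lemma tail_convolution:
  assumes "finite_measure \<nu>" "sets \<nu> = sets borel" "finite_measure \<mu>" "sets \<mu> = sets borel"
  shows "tail (\<nu> \<star> \<mu>) u = (\<integral>x. tail \<mu> (u - x) \<partial>\<nu>)"
proof -
  have "emeasure (\<nu> \<star> \<mu>) {u<..} = (\<integral>\<^sup>+x. emeasure \<mu> {y. y + x \<in> {u<..}} \<partial>\<nu>)"
    using assms sets_eq_imp_space_eq[of \<nu> borel] sets_eq_imp_space_eq[of \<mu> borel]
    by (intro convolution_emeasure) auto
  also have "\<dots> = (\<integral>\<^sup>+x. ennreal (tail \<mu> (u - x)) \<partial>\<nu>)"
    using assms by (intro nn_integral_cong) (auto simp: finite_measure.emeasure_eq_measure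
        intro!: arg_cong[where f = "measure \<mu>"])
  also have "\<dots> = ennreal (\<integral>x. tail \<mu> (u - x) \<partial>\<nu>)"
    using assms by (intro nn_integral_eq_integral integrable_tail_diff) auto
  finally show ?thesis
    using assms by (simp add: measure_def integral_nonneg_AE)
qed

lemma tail_convolution_ge:
  assumes "finite_measure \<nu>" "sets \<nu> = sets borel" "finite_measure \<mu>" "sets \<mu> = sets borel"
  shows "tail \<mu> c * tail \<nu> (u - c) \<le> tail (\<nu> \<star> \<mu>) u"
proof -
  have "tail \<mu> c * tail \<nu> (u - c) = (\<integral>x. tail \<nu> (u - c) * indicator {c<..} x \<partial>\<mu>)"
    unfolding integral_mult_right_zero Bochner_Integration.integral_indicator
    using assms sets_eq_imp_space_eq[of \<mu> borel] by simp
  also have "\<dots> \<le> (\<integral>x. tail \<nu> (u - x) \<partial>\<mu>)"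
  proof (rule integral_mono)
    show "integrable \<mu> (\<lambda>x. tail \<nu> (u - c) * indicator {c<..} x)"
      using assms by (intro integrable_mult_right integrable_real_indicator)
        (auto simp: finite_measure.emeasure_finite less_top[symmetric])
    show "integrable \<mu> (\<lambda>x. tail \<nu> (u - x))"
      using assms by (intro integrable_tail_diff)
    show "tail \<nu> (u - c) * indicator {c<..} x \<le> tail \<nu> (u - x)" for x
      using assms by (auto intro: tail_antimono simp: indicator_def)
  qed
  also have "\<dots> = tail (\<nu> \<star> \<mu>) u"
    using assms by (simp add: tail_convolution convolution_commutative)
  finally show ?thesis .
qed

lemma tail_shift_bigo_convolution:
  assumes "finite_measure \<nu>" "sets \<nu> = sets borel" "finite_measure \<mu>" "sets \<mu> = sets borel"
    and "tail \<mu> c > 0"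
  shows "(\<lambda>u. tail \<nu> (u - c)) \<in> O[at_top](tail (\<nu> \<star> \<mu>))"
proof (rule landau_o.bigI)
  show "1 / tail \<mu> c > 0" using assms(5) by simp
  show "\<forall>\<^sub>F u in at_top. norm (tail \<nu> (u - c)) \<le> 1 / tail \<mu> c * norm (tail (\<nu> \<star> \<mu>) u)"
    using assms tail_convolution_ge[OF assms(1-4)] by (simp add: field_simps mult.commute)
qed

lemma tail_smallo_convolution_if_tail_shift_smallo:
  assumes "finite_measure \<nu>" "sets \<nu> = sets borel" "finite_measure \<mu>" "sets \<mu> = sets borel"
    and "tail \<mu> c > 0" and "(\<lambda>u. tail \<nu> (u + c)) \<in> o[at_top](tail \<nu>)"
  shows "tail \<nu> \<in> o[at_top](tail (\<nu> \<star> \<mu>))"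
proof -
  from landau_o.small.compose[OF assms(6) filterlim_minus_const_at_top_real[of c]]
  have "tail \<nu> \<in> o[at_top](\<lambda>u. tail \<nu> (u - c))" by simp
  also have "(\<lambda>u. tail \<nu> (u - c)) \<in> O[at_top](tail (\<nu> \<star> \<mu>))"
    using assms by (intro tail_shift_bigo_convolution)
  finally show ?thesis .
qed

lemma tail_shift_smallo_convolution:
  assumes "finite_measure \<nu>" "sets \<nu> = sets borel" "finite_measure \<mu>" "sets \<mu> = sets borel"
    and "AE x in \<mu>. x \<le> A" and "(\<lambda>u. tail \<nu> (u + c)) \<in> o[at_top](tail \<nu>)"
  shows "(\<lambda>u. tail (\<nu> \<star> \<mu>) (u + c)) \<in> o[at_top](tail (\<nu> \<star> \<mu>))"
proof (rule landau_o.smallI)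
  fix \<epsilon> :: real assume "\<epsilon> > 0"
  from landau_o.smallD[OF assms(6) this]
  obtain U where U: "\<And>v. v \<ge> U \<Longrightarrow> tail \<nu> (v + c) \<le> \<epsilon> * tail \<nu> v"
    by (auto simp: eventually_at_top_linorder)
  have "tail (\<nu> \<star> \<mu>) (u + c) \<le> \<epsilon> * tail (\<nu> \<star> \<mu>) u" if "u \<ge> U + A" for u
  proof -
    have "tail (\<nu> \<star> \<mu>) (u + c) = (\<integral>x. tail \<nu> (u + c - x) \<partial>\<mu>)"
      using assms by (simp add: tail_convolution convolution_commutative)
    also have "\<dots> \<le> (\<integral>x. \<epsilon> * tail \<nu> (u - x) \<partial>\<mu>)"
    proof (rule integral_mono_AE)
      show "integrable \<mu> (\<lambda>x. tail \<nu> (u + c - x))" "integrable \<mu> (\<lambda>x. \<epsilon> * tail \<nu> (u - x))"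
        using assms by (auto intro: integrable_tail_diff)
      show "AE x in \<mu>. tail \<nu> (u + c - x) \<le> \<epsilon> * tail \<nu> (u - x)"
        using assms(5)
      proof eventually_elim
        case (elim x)
        with that have "u - x \<ge> U" by simp
        from U[OF this] show ?case by (simp add: algebra_simps)
      qed
    qed
    also have "\<dots> = \<epsilon> * tail (\<nu> \<star> \<mu>) u"
      using assms by (simp add: tail_convolution convolution_commutative)
    finally show ?thesis .
  qed
  then show "\<forall>\<^sub>F u in at_top. norm (tail (\<nu> \<star> \<mu>) (u + c)) \<le> \<epsilon> * norm (tail (\<nu> \<star> \<mu>) u)"
    by (auto simp: eventually_at_top_linorder)
qed

lemma tail_convolution_le_split:
  assumes "finite_measure \<nu>" "sets \<nu> = sets borel" "prob_space \<mu>" "sets \<mu> = sets borel"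
    and "finite_measure \<mu>'" "sets \<mu>' = sets borel"
    and "\<delta> \<ge> 0" and "\<And>v. v \<ge> L \<Longrightarrow> tail \<mu> v \<le> \<delta> * tail \<mu>' v"
  shows "tail (\<nu> \<star> \<mu>) u \<le> \<delta> * tail (\<nu> \<star> \<mu>') u + tail \<nu> (u - L)"
proof -
  have fin: "finite_measure \<mu>" using assms(3) by (simp add: prob_space_def)
  have "tail (\<nu> \<star> \<mu>) u = (\<integral>w. tail \<mu> (u - w) \<partial>\<nu>)"
    using assms fin by (simp add: tail_convolution)
  also have "\<dots> \<le> (\<integral>w. \<delta> * tail \<mu>' (u - w) + indicator {u - L<..} w \<partial>\<nu>)"
  proof (rule integral_mono)
    show "integrable \<nu> (\<lambda>w. tail \<mu> (u - w))"
      using assms fin by (intro integrable_tail_diff)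
    show "integrable \<nu> (\<lambda>w. \<delta> * tail \<mu>' (u - w) + indicator {u - L<..} w)"
      using assms by (intro Bochner_Integration.integrable_add integrable_mult_right
          integrable_tail_diff integrable_real_indicator)
        (auto simp: finite_measure.emeasure_finite less_top[symmetric])
    show "tail \<mu> (u - w) \<le> \<delta> * tail \<mu>' (u - w) + indicator {u - L<..} w" for w
    proof (cases "u - w \<ge> L")
      case True
      then show ?thesis using assms(8)[OF True] by (simp add: indicator_def)
    next
      case False
      then show ?thesis
        using assms(7) prob_space.prob_le_1[OF assms(3)] by (simp add: indicator_def add_increasing)
    qed
  qed
  also have "\<dots> = \<delta> * tail (\<nu> \<star> \<mu>') u + tail \<nu> (u - L)"
    using assms sets_eq_imp_space_eq[of \<nu> borel]
    by (subst Bochner_Integration.integral_add)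
       (auto intro!: integrable_mult_right integrable_tail_diff integrable_real_indicator
         simp: tail_convolution finite_measure.emeasure_finite less_top[symmetric])
  finally show ?thesis .
qed

lemma tail_smallo_convolution_step:
  assumes "finite_measure \<nu>" "sets \<nu> = sets borel" "prob_space \<mu>" "sets \<mu> = sets borel"
    and "tail \<mu> \<in> o[at_top](tail (\<mu> \<star> \<mu>))" "\<And>u. tail \<mu> u > 0"
    and "tail \<nu> \<in> o[at_top](tail (\<nu> \<star> \<mu>))"
  shows "tail (\<nu> \<star> \<mu>) \<in> o[at_top](tail ((\<nu> \<star> \<mu>) \<star> \<mu>))"
proof (rule landau_o.smallI)
  fix \<epsilon> :: real assume "\<epsilon> > 0"
  have fin: "finite_measure \<mu>" "finite_measure (\<nu> \<star> \<mu>)" "finite_measure (\<mu> \<star> \<mu>)"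
    using assms by (auto intro: convolution_finite simp: prob_space_def)
  from landau_o.smallD[OF assms(5), of "\<epsilon> / 2"] \<open>\<epsilon> > 0\<close>
  obtain L where L: "\<And>v. v \<ge> L \<Longrightarrow> tail \<mu> v \<le> \<epsilon> / 2 * tail (\<mu> \<star> \<mu>) v"
    by (auto simp: eventually_at_top_linorder)
  have assoc: "(\<nu> \<star> (\<mu> \<star> \<mu>)) = ((\<nu> \<star> \<mu>) \<star> \<mu>)"
    using assms fin by (intro convolution_associative) auto
  have split: "tail (\<nu> \<star> \<mu>) u \<le> \<epsilon> / 2 * tail ((\<nu> \<star> \<mu>) \<star> \<mu>) u + tail \<nu> (u - L)" for u
    unfolding assoc[symmetric] using assms fin \<open>\<epsilon> > 0\<close> L
    by (intro tail_convolution_le_split) auto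
  from landau_o.small.compose[OF assms(7) filterlim_minus_const_at_top_real[of L]]
  have "(\<lambda>u. tail \<nu> (u - L)) \<in> o[at_top](\<lambda>u. tail (\<nu> \<star> \<mu>) (u - L))" .
  also have "(\<lambda>u. tail (\<nu> \<star> \<mu>) (u - L)) \<in> O[at_top](tail ((\<nu> \<star> \<mu>) \<star> \<mu>))"
    using assms fin by (intro tail_shift_bigo_convolution) auto
  finally have "(\<lambda>u. tail \<nu> (u - L)) \<in> o[at_top](tail ((\<nu> \<star> \<mu>) \<star> \<mu>))" .
  from landau_o.smallD[OF this, of "\<epsilon> / 2"] \<open>\<epsilon> > 0\<close>
  show "\<forall>\<^sub>F u in at_top. norm (tail (\<nu> \<star> \<mu>) u) \<le> \<epsilon> * norm (tail ((\<nu> \<star> \<mu>) \<star> \<mu>) u)"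
    by (auto elim!: eventually_mono intro: order.trans[OF split])
qed

lemma tail_shift_smallo_if_cond_P:
  assumes "finite_measure \<nu>" "sets \<nu> = sets borel" "cond_P \<nu> a" "a \<le> c"
  shows "(\<lambda>u. tail \<nu> (u + c)) \<in> o[at_top](tail \<nu>)"
proof -
  have "(\<lambda>u. tail \<nu> (u + c)) \<in> O[at_top](\<lambda>u. tail \<nu> (u + a))"
    using assms by (intro landau_o.bigI[of 1]) (auto intro!: always_eventually tail_antimono)
  also have "(\<lambda>u. tail \<nu> (u + a)) \<in> o[at_top](tail \<nu>)"
  proof (rule smalloI_tendsto)
    show "((\<lambda>u. tail \<nu> (u + a) / tail \<nu> u) \<longlongrightarrow> 0) at_top"
      using assms(3) by (simp add: cond_P_def)
    show "\<forall>\<^sub>F u in at_top. tail \<nu> u \<noteq> 0"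
      using eventually_gt_at_top[of "0::real"]
      by eventually_elim (use assms(3) in \<open>force simp: cond_P_def\<close>)
  qed
  finally show ?thesis .
qed

lemma tail_pos_if_light_tail_i:
  assumes "finite_measure \<mu>" "sets \<mu> = sets borel" "light_tail_i \<mu>"
  shows "tail \<mu> u > 0"
proof -
  have "tail \<mu> (max u 1) > 0"
    using assms(3) by (simp add: light_tail_i_def)
  also have "tail \<mu> (max u 1) \<le> tail \<mu> u"
    using assms by (intro tail_antimono) auto
  finally show ?thesis .
qed

lemma tail_smallo_self_convolution_if_light_tail_i:
  assumes "finite_measure \<mu>" "sets \<mu> = sets borel" "light_tail_i \<mu>"
  shows "tail \<mu> \<in> o[at_top](tail (\<mu> \<star> \<mu>))"
proof (rule smalloI_tendsto)
  show "((\<lambda>u. tail \<mu> u / tail (\<mu> \<star> \<mu>) u) \<longlongrightarrow> 0) at_top"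
    using assms(3) by (simp add: light_tail_i_def)
  have "tail (\<mu> \<star> \<mu>) u > 0" for u
  proof -
    have "0 < tail \<mu> 0 * tail \<mu> (u - 0)"
      using assms by (simp add: tail_pos_if_light_tail_i)
    also have "\<dots> \<le> tail (\<mu> \<star> \<mu>) u"
      using assms by (intro tail_convolution_ge)
    finally show ?thesis .
  qed
  then show "\<forall>\<^sub>F u in at_top. tail (\<mu> \<star> \<mu>) u \<noteq> 0"
    by (simp add: less_imp_neq[symmetric])
qed

theorem tail_smallo_iterated_convolution:
  fixes \<nu> :: "nat \<Rightarrow> real measure"
  assumes "\<And>j. finite_measure (\<nu> j)" "\<And>j. sets (\<nu> j) = sets borel"
    and "prob_space \<mu>" "sets \<mu> = sets borel"
    and "\<And>j. \<nu> (Suc j) = (\<nu> j \<star> \<mu>)" and "cond_P (\<nu> 0) a"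
    and "light_tail_i \<mu> \<or> (\<exists>A \<alpha>. light_tail_ii \<mu> A \<alpha> \<and> a \<le> \<alpha>)"
  shows "tail (\<nu> k) \<in> o[at_top](tail (\<nu> (Suc k)))"
proof -
  have fin: "finite_measure \<mu>" using assms(3) by (simp add: prob_space_def)
  show ?thesis
    using assms(7)
  proof
    assume light: "light_tail_i \<mu>"
    have pos: "tail \<mu> u > 0" for u
      using fin assms(4) light by (rule tail_pos_if_light_tail_i)
    show ?thesis
    proof (induction k)
      case 0
      show ?case
        unfolding assms(5) using assms fin pos
        by (intro tail_smallo_convolution_if_tail_shift_smallo tail_shift_smallo_if_cond_P) auto
    next
      case (Suc k)
      then show ?case
        unfolding assms(5) using assms fin pos light
        by (intro tail_smallo_convolution_step tail_smallo_self_convolution_if_light_tail_i) auto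
    qed
  next
    assume "\<exists>A \<alpha>. light_tail_ii \<mu> A \<alpha> \<and> a \<le> \<alpha>"
    then obtain A \<alpha> where bounded: "AE x in \<mu>. x \<le> A" and pos: "tail \<mu> \<alpha> > 0" and "a \<le> \<alpha>"
      by (auto simp: light_tail_ii_def)
    have "(\<lambda>u. tail (\<nu> j) (u + \<alpha>)) \<in> o[at_top](tail (\<nu> j))" for j
    proof (induction j)
      case 0
      show ?case using assms \<open>a \<le> \<alpha>\<close> by (intro tail_shift_smallo_if_cond_P) auto
    next
      case (Suc j)
      then show ?case
        unfolding assms(5) using assms fin bounded by (intro tail_shift_smallo_convolution) auto
    qed
    then show ?thesis
      unfolding assms(5) using assms fin pos by (intro tail_smallo_convolution_if_tail_shift_smallo)
  qed
qed

lemma (in prob_space) distr_add_partial_sum_Suc: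
  fixes X :: "nat \<Rightarrow> 'a \<Rightarrow> real"
  assumes "\<And>i. random_variable borel (X i)" "random_variable borel Y"
    and "indep_vars (\<lambda>_. borel) (\<lambda>i. if i = 0 then Y else X i) UNIV"
  shows "distr M borel (\<lambda>\<omega>. Y \<omega> + (\<Sum>i=1..Suc k. X i \<omega>))
       = (distr M borel (\<lambda>\<omega>. Y \<omega> + (\<Sum>i=1..k. X i \<omega>)) \<star> distr M borel (X (Suc k)))"
proof -
  define W where "W = (\<lambda>i. if i = 0 then Y else X i)"
  have [measurable]: "random_variable borel (W i)" for i
    using assms by (simp add: W_def)
  have fin: "finite_measure (distr M borel f)" if "random_variable borel f" for f
    using prob_space_distr[OF that] by (simp add: prob_space_def)
  have partial_sum: "Y \<omega> + (\<Sum>i=1..j. X i \<omega>) = (\<Sum>i\<in>{0..j}. W i \<omega>)" for j \<omega>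
  proof -
    have "(\<Sum>i\<in>{0..j}. W i \<omega>) = W 0 \<omega> + (\<Sum>i=Suc 0..j. W i \<omega>)"
      by (rule sum.atLeast_Suc_atMost) simp
    also have "(\<Sum>i=Suc 0..j. W i \<omega>) = (\<Sum>i=1..j. X i \<omega>)"
      by (intro sum.cong) (auto simp: W_def)
    finally show ?thesis
      by (simp add: W_def)
  qed
  have "indep_var borel (W (Suc k)) borel (\<lambda>\<omega>. \<Sum>i\<in>{0..k}. W i \<omega>)"
    using indep_vars_subset[OF assms(3)[folded W_def]] by (intro indep_vars_sum) auto
  then have "distr M borel (\<lambda>\<omega>. W (Suc k) \<omega> + (\<Sum>i\<in>{0..k}. W i \<omega>))
      = (distr M borel (W (Suc k)) \<star> distr M borel (\<lambda>\<omega>. \<Sum>i\<in>{0..k}. W i \<omega>))"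
    by (intro sum_indep_random_variable) auto
  also have "\<dots> = (distr M borel (\<lambda>\<omega>. \<Sum>i\<in>{0..k}. W i \<omega>) \<star> distr M borel (W (Suc k)))"
    by (intro convolution_commutative fin) auto
  finally show ?thesis
    unfolding partial_sum by (simp add: add.commute W_def)
qed

theorem lemma2:
  fixes M :: "'a measure" and X :: "nat \<Rightarrow> 'a \<Rightarrow> real" and Y :: "'a \<Rightarrow> real" and a :: real
  assumes "prob_space M"
    and "\<And>i. X i \<in> borel_measurable M"
    and "Y \<in> borel_measurable M"
    and "prob_space.indep_vars M (\<lambda>_. borel) (\<lambda>i. if i = 0 then Y else X i) UNIV"
    and "\<And>i. i \<ge> 1 \<Longrightarrow> distr M borel (X i) = distr M borel (X 1)"
    and "cond_P (distr M borel Y) a"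
    and "light_tail_i (distr M borel (X 1)) \<or>
         (\<exists>A \<alpha>. light_tail_ii (distr M borel (X 1)) A \<alpha> \<and> a \<le> \<alpha>)"
    and "k \<ge> 1"
  shows "((\<lambda>u. measure M {\<omega> \<in> space M. Y \<omega> + (\<Sum>i=1..k. X i \<omega>) > u}
              / measure M {\<omega> \<in> space M. Y \<omega> + (\<Sum>i=1..Suc k. X i \<omega>) > u}) \<longlongrightarrow> 0) at_top"
proof -
  interpret prob_space M by fact
  define S where "S j \<omega> = Y \<omega> + (\<Sum>i=1..j. X i \<omega>)" for j \<omega>
  define \<nu> where "\<nu> j = distr M borel (S j)" for j
  have [measurable]: "S j \<in> borel_measurable M" for j
    using assms(2,3) unfolding S_def by measurable
  have "tail (\<nu> k) \<in> o[at_top](tail (\<nu> (Suc k)))"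
  proof (rule tail_smallo_iterated_convolution[where \<mu> = "distr M borel (X 1)" and a = a])
    show "finite_measure (\<nu> j)" "sets (\<nu> j) = sets borel" for j
      using prob_space_distr[of "S j" borel] by (auto simp: \<nu>_def prob_space_def)
    show "prob_space (distr M borel (X 1))" "sets (distr M borel (X 1)) = sets borel"
      using assms(2) by (auto intro: prob_space_distr)
    show "\<nu> (Suc j) = (\<nu> j \<star> distr M borel (X 1))" for j
      using distr_add_partial_sum_Suc[OF assms(2-4)] assms(5)[of "Suc j"]
      by (simp add: \<nu>_def S_def[abs_def])
    show "cond_P (\<nu> 0) a"
      using assms(6) by (simp add: \<nu>_def S_def[abs_def])
  qed (rule assms(7))
  moreover have "measure M {\<omega> \<in> space M. S j \<omega> > u} = tail (\<nu> j) u" for j u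
    unfolding \<nu>_def by (subst measure_distr) (auto intro: arg_cong[where f = "measure M"])
  ultimately show ?thesis
    unfolding S_def[symmetric] by (simp add: smalloD_tendsto)
qed

end
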